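(* Let $n\geq 2$ and let $S_n=K_{1,n-1}$ be the star on $n$ vertices, with centre vertex $v$ (a vertex adjacent to all others). Let $c_0:V(S_n)\to\mathbb{Z}$ be any initial chip configuration. Let $\ell_M$ be a leaf with the maximum number of chips in $c_0$ among all leaves and $\ell_m$ a leaf with the minimum number of chips in $c_0$ among all leaves, and let $d_0=c_0(\ell_M)-c_0(\ell_m)$. Then the configuration is tight with pre-period length at most \[\left\lceil\frac{\max \{ 0,\ c_0(v) - c_0(\ell_M),\ c_0(\ell_m) - c_0(v) \}}{n}\right\rceil + 2d_0.\]
   Context: Diffusion process: for a finite simple graph $G$ and a chip configuration $c_t:V(G)\to\mathbb{Z}$ (negative values allowed), the next configuration is defined simultaneously for every vertex $u$ by $c_{t+1}(u)=c_t(u)-|\{w\in N(u): c_t(u)>c_t(w)\}|+|\{w\in N(u): c_t(u)<c_t(w)\}|$. Tight means the process is eventually fixed or eventually periodic with period length 2, i.e. $c_{t+2}=c_t$ for some $t$; the pre-period length is then the least $t\geq0$ with $c_{t+p}=c_t$ where $p$ is the minimal period. *)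

theory Defs
  imports Complex_Main
begin

text \<open>Graphs: finite vertex set V with symmetric irreflexive adjacency E.
  Configurations are functions from vertices to int; values outside V are left unchanged.\<close>

definition diffusion_step :: "'a set \<Rightarrow> ('a \<Rightarrow> 'a \<Rightarrow> bool) \<Rightarrow> ('a \<Rightarrow> int) \<Rightarrow> ('a \<Rightarrow> int)" where
  "diffusion_step V E c = (\<lambda>u. if u \<in> V then
       c u - int (card {w \<in> V. E u w \<and> c u > c w}) + int (card {w \<in> V. E u w \<and> c u < c w})
     else c u)"

definition diffusion :: "'a set \<Rightarrow> ('a \<Rightarrow> 'a \<Rightarrow> bool) \<Rightarrow> ('a \<Rightarrow> int) \<Rightarrow> nat \<Rightarrow> ('a \<Rightarrow> int)" where
  "diffusion V E c0 t = (diffusion_step V E ^^ t) c0"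

definition tight :: "'a set \<Rightarrow> ('a \<Rightarrow> 'a \<Rightarrow> bool) \<Rightarrow> ('a \<Rightarrow> int) \<Rightarrow> bool" where
  "tight V E c0 \<longleftrightarrow> (\<exists>t. diffusion V E c0 (t + 2) = diffusion V E c0 t)"

definition period :: "'a set \<Rightarrow> ('a \<Rightarrow> 'a \<Rightarrow> bool) \<Rightarrow> ('a \<Rightarrow> int) \<Rightarrow> nat" where
  "period V E c0 = (LEAST p. p > 0 \<and> (\<exists>t. diffusion V E c0 (t + p) = diffusion V E c0 t))"

definition preperiod :: "'a set \<Rightarrow> ('a \<Rightarrow> 'a \<Rightarrow> bool) \<Rightarrow> ('a \<Rightarrow> int) \<Rightarrow> nat" where
  "preperiod V E c0 = (LEAST t. diffusion V E c0 (t + period V E c0) = diffusion V E c0 t)"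

definition star_adj :: "nat \<Rightarrow> nat \<Rightarrow> nat \<Rightarrow> bool" where
  "star_adj n u w \<longleftrightarrow> u < n \<and> w < n \<and> ((u = 0 \<and> w \<noteq> 0) \<or> (w = 0 \<and> u \<noteq> 0))"

end

theory Submission
  imports Defs
begin

text \<open>The potential \<open>\<lceil>E/n\<rceil> + 2(M - m)\<close>, where \<open>M\<close> and \<open>m\<close> are the extreme leaf values and
  \<open>E\<close> is the distance of the centre from the interval \<open>[m, M]\<close>, is the bound of the theorem, and it
  strictly decreases at every step until the configuration is 2-periodic.
  If the centre lies above all leaves, every leaf gains a chip and the centre loses \<open>n - 1\<close>,
  so \<open>E\<close> drops by \<open>n\<close>, unless the centre ends up below all leaves, in which case the next
  step undoes this one. A centre below all leaves is the mirror image under negation.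
  If the centre lies in \<open>[m, M]\<close>, the leaf spread shrinks by at least one while the centre
  moves by less than \<open>n\<close>, so the ceiling term grows by at most one.\<close>

lemma diffusion_step_uminus:
  "diffusion_step V E (\<lambda>u. - c u) = (\<lambda>u. - diffusion_step V E c u)"
  unfolding diffusion_step_def by auto

lemma funpow_eventually_periodic:
  fixes f :: "'a \<Rightarrow> 'a"
  assumes "(f ^^ (t + p)) x = (f ^^ t) x"
  shows "(f ^^ (t + p * j + s)) x = (f ^^ (t + s)) x"
proof (induction j)
  case (Suc j)
  have "t + p * Suc j + s = (p * j + s) + (t + p)" by simp
  then have "(f ^^ (t + p * Suc j + s)) x = (f ^^ (p * j + s)) ((f ^^ (t + p)) x)"
    by (simp only: funpow_add[of "p * j + s" "t + p"] o_apply)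
  also have "\<dots> = (f ^^ (p * j + s + t)) x"
    by (simp only: assms funpow_add[of "p * j + s" t] o_apply)
  also have "\<dots> = (f ^^ (t + p * j + s)) x"
    by (simp only: ac_simps)
  finally show ?case using Suc.IH by simp
qed simp

lemma tight_preperiod_le:
  assumes period2: "diffusion V E c (T + 2) = diffusion V E c T"
  shows "tight V E c \<and> preperiod V E c \<le> T"
proof
  show "tight V E c" unfolding tight_def using period2 by blast
  let ?D = "diffusion V E c"
  define p where "p = period V E c"
  have p_least: "p > 0 \<and> (\<exists>t. ?D (t + p) = ?D t)"
    unfolding p_def period_def by (rule LeastI[of _ 2]) (use period2 in auto)
  then obtain t where t: "?D (t + p) = ?D t" by blast
  have "p \<le> 2"
    unfolding p_def period_def by (rule Least_le) (use period2 in auto)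
  with p_least have "p = 1 \<or> p = 2" by linarith
  have "?D (T + p) = ?D T"
    using \<open>p = 1 \<or> p = 2\<close>
  proof
    assume "p = 1"
    \<comment> \<open>the orbit is constant from \<open>t\<close> and 2-periodic from \<open>T\<close>, hence constant from \<open>T\<close>\<close>
    have "?D (T + s) = ?D t" for s
    proof -
      have "?D (T + s) = ?D (T + 2 * t + s)"
        using funpow_eventually_periodic[where f = "diffusion_step V E" and t = T and p = 2 and j = t] period2
        by (simp add: diffusion_def)
      also have "\<dots> = ?D (t + 1 * (T + t + s) + 0)"
        by (rule arg_cong[where f = ?D]) simp
      also have "\<dots> = ?D t"
        using funpow_eventually_periodic[where f = "diffusion_step V E" and p = 1 and j = "T + t + s" and s = 0] t \<open>p = 1\<close>
        by (simp add: diffusion_def)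
      finally show ?thesis .
    qed
    from this[of p] this[of 0] show ?thesis by simp
  qed (use period2 in simp)
  then show "preperiod V E c \<le> T"
    unfolding preperiod_def p_def by (rule Least_le)
qed

lemma diffusion_step_const_on:
  assumes "\<forall>u\<in>V. c u = k"
  shows "diffusion_step V E c = c"
proof -
  have no_neighbour_differs:
    "{w \<in> V. E u w \<and> c w < c u} = {}" "{w \<in> V. E u w \<and> c u < c w} = {}"
    if "u \<in> V" for u
    using assms that by auto
  show ?thesis
    by (simp add: diffusion_step_def fun_eq_iff no_neighbour_differs)
qed

abbreviation star_step :: "nat \<Rightarrow> (nat \<Rightarrow> int) \<Rightarrow> nat \<Rightarrow> int" where
  "star_step n \<equiv> diffusion_step {0..<n} (star_adj n)"

lemma star_step_leaf:
  assumes "l \<in> {1..<n}"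
  shows "star_step n c l = c l + sgn (c 0 - c l)"
proof -
  have "{w \<in> {0..<n}. star_adj n l w \<and> c w < c l} = (if c 0 < c l then {0} else {})"
    and "{w \<in> {0..<n}. star_adj n l w \<and> c l < c w} = (if c l < c 0 then {0} else {})"
    using assms by (auto simp: star_adj_def)
  then show ?thesis
    using assms by (simp add: diffusion_step_def sgn_if)
qed

lemma star_step_centre:
  assumes "n \<ge> 2"
  shows "star_step n c 0 =
    c 0 - int (card {l \<in> {1..<n}. c l < c 0}) + int (card {l \<in> {1..<n}. c 0 < c l})"
proof -
  have "{w \<in> {0..<n}. star_adj n 0 w \<and> P w} = {l \<in> {1..<n}. P l}" for P
    by (auto simp: star_adj_def)
  then show ?thesis
    using assms by (simp add: diffusion_step_def)
qed

lemma star_step_centre_above: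
  assumes "n \<ge> 2" and above: "\<forall>l\<in>{1..<n}. c l < c 0"
  shows "star_step n c = (\<lambda>u. if u = 0 then c 0 - (int n - 1) else if u < n then c u + 1 else c u)"
proof
  fix u
  have "{l \<in> {1..<n}. c l < c 0} = {1..<n}" and "{l \<in> {1..<n}. c 0 < c l} = {}"
    using above by fastforce+
  then have "star_step n c 0 = c 0 - (int n - 1)"
    using star_step_centre[OF \<open>n \<ge> 2\<close>] \<open>n \<ge> 2\<close> by simp
  then show "star_step n c u = (if u = 0 then c 0 - (int n - 1) else if u < n then c u + 1 else c u)"
    using star_step_leaf[of u n c] above \<open>n \<ge> 2\<close> by (auto simp: diffusion_step_def)
qed

lemma star_step_centre_below:
  assumes "n \<ge> 2" and below: "\<forall>l\<in>{1..<n}. c 0 < c l"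
  shows "star_step n c = (\<lambda>u. if u = 0 then c 0 + (int n - 1) else if u < n then c u - 1 else c u)"
proof -
  have "star_step n c = (\<lambda>u. - star_step n (\<lambda>u. - c u) u)"
    using diffusion_step_uminus[of "{0..<n}" "star_adj n" "\<lambda>u. - c u"] by simp
  also have "\<dots> = (\<lambda>u. if u = 0 then c 0 + (int n - 1) else if u < n then c u - 1 else c u)"
    using star_step_centre_above[of n "\<lambda>u. - c u"] assms by (simp add: fun_eq_iff)
  finally show ?thesis .
qed

definition leaf_max :: "nat \<Rightarrow> (nat \<Rightarrow> int) \<Rightarrow> int" where
  "leaf_max n c = Max (c ` {1..<n})"

definition leaf_min :: "nat \<Rightarrow> (nat \<Rightarrow> int) \<Rightarrow> int" where
  "leaf_min n c = Min (c ` {1..<n})"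

lemma leaf_max_le_iff: "n \<ge> 2 \<Longrightarrow> leaf_max n c \<le> x \<longleftrightarrow> (\<forall>l\<in>{1..<n}. c l \<le> x)"
  by (simp add: leaf_max_def)

lemma le_leaf_min_iff: "n \<ge> 2 \<Longrightarrow> x \<le> leaf_min n c \<longleftrightarrow> (\<forall>l\<in>{1..<n}. x \<le> c l)"
  by (simp add: leaf_min_def)

lemma le_leaf_max: "l \<in> {1..<n} \<Longrightarrow> c l \<le> leaf_max n c"
  by (simp add: leaf_max_def)

lemma leaf_min_le: "l \<in> {1..<n} \<Longrightarrow> leaf_min n c \<le> c l"
  by (simp add: leaf_min_def)

lemma leaf_max_attained:
  assumes "n \<ge> 2"
  obtains l where "l \<in> {1..<n}" and "c l = leaf_max n c"
proof -
  have "leaf_max n c \<in> c ` {1..<n}"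
    unfolding leaf_max_def using assms by (intro Max_in) auto
  then show ?thesis using that by auto
qed

lemma leaf_min_attained:
  assumes "n \<ge> 2"
  obtains l where "l \<in> {1..<n}" and "c l = leaf_min n c"
proof -
  have "leaf_min n c \<in> c ` {1..<n}"
    unfolding leaf_min_def using assms by (intro Min_in) auto
  then show ?thesis using that by auto
qed

lemma leaf_max_cong: "(\<And>l. l \<in> {1..<n} \<Longrightarrow> c l = d l) \<Longrightarrow> leaf_max n c = leaf_max n d"
  unfolding leaf_max_def by (metis image_cong)

lemma leaf_min_cong: "(\<And>l. l \<in> {1..<n} \<Longrightarrow> c l = d l) \<Longrightarrow> leaf_min n c = leaf_min n d"
  unfolding leaf_min_def by (metis image_cong)

lemma leaf_max_add: "n \<ge> 2 \<Longrightarrow> leaf_max n (\<lambda>u. c u + k) = leaf_max n c + k"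
  unfolding leaf_max_def by (intro Max_add_commute) auto

lemma leaf_min_add: "n \<ge> 2 \<Longrightarrow> leaf_min n (\<lambda>u. c u + k) = leaf_min n c + k"
  unfolding leaf_min_def by (intro Min_add_commute) auto

lemma leaf_max_uminus: "n \<ge> 2 \<Longrightarrow> leaf_max n (\<lambda>u. - c u) = - leaf_min n c"
  unfolding leaf_max_def leaf_min_def by (simp add: image_image)

lemma leaf_min_uminus: "n \<ge> 2 \<Longrightarrow> leaf_min n (\<lambda>u. - c u) = - leaf_max n c"
  unfolding leaf_max_def leaf_min_def by (simp add: image_image)

definition centre_excess :: "nat \<Rightarrow> (nat \<Rightarrow> int) \<Rightarrow> int" where
  "centre_excess n c = max 0 (max (c 0 - leaf_max n c) (leaf_min n c - c 0))"

definition star_potential :: "nat \<Rightarrow> (nat \<Rightarrow> int) \<Rightarrow> int" where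
  "star_potential n c =
     \<lceil>real_of_int (centre_excess n c) / real n\<rceil> + 2 * (leaf_max n c - leaf_min n c)"

lemma leaf_min_le_leaf_max: "n \<ge> 2 \<Longrightarrow> leaf_min n c \<le> leaf_max n c"
  using leaf_min_le[of 1 n c] le_leaf_max[of 1 n c] by simp

lemma star_potential_nonneg:
  assumes "n \<ge> 2"
  shows "0 \<le> star_potential n c"
proof -
  have "0 \<le> real_of_int (centre_excess n c) / real n"
    by (simp add: centre_excess_def)
  then have "0 \<le> \<lceil>real_of_int (centre_excess n c) / real n\<rceil>"
    by simp
  then show ?thesis
    using leaf_min_le_leaf_max[OF assms, of c] by (simp add: star_potential_def)
qed

lemma star_potential_uminus: "n \<ge> 2 \<Longrightarrow> star_potential n (\<lambda>u. - c u) = star_potential n c"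
  by (simp add: star_potential_def centre_excess_def leaf_max_uminus leaf_min_uminus max.commute)

lemma ceiling_divide_max_zero_diff:
  fixes k :: int
  assumes "n > 0" and "k > 0"
  shows "\<lceil>real_of_int (max 0 (k - int n)) / real n\<rceil> = \<lceil>real_of_int k / real n\<rceil> - 1"
proof (cases "k \<le> int n")
  case True
  then have "real_of_int k / real n \<le> 1" and "0 < real_of_int k / real n"
    using assms by simp_all
  then have "\<lceil>real_of_int k / real n\<rceil> = 1"
    by (simp add: ceiling_eq_iff)
  then show ?thesis using True by simp
next
  case False
  then have "real_of_int (max 0 (k - int n)) / real n = real_of_int k / real n - 1"
    using assms by (simp add: diff_divide_distrib)
  then show ?thesis by simp
qed

lemma star_potential_decreases_centre_above:
  assumes n: "n \<ge> 2" and above: "\<forall>l\<in>{1..<n}. c l < c 0"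
  shows "star_step n (star_step n c) = c \<or> star_potential n (star_step n c) < star_potential n c"
proof -
  define c' v M m where "c' = star_step n c" and "v = c 0"
    and "M = leaf_max n c" and "m = leaf_min n c"
  have step: "c' = (\<lambda>u. if u = 0 then v - (int n - 1) else if u < n then c u + 1 else c u)"
    unfolding c'_def v_def using star_step_centre_above[OF n above] .
  then have leaves: "c' l = c l + 1" if "l \<in> {1..<n}" for l
    using that by simp
  have M': "leaf_max n c' = M + 1"
    using leaf_max_cong[of n c' "\<lambda>u. c u + 1"] leaves leaf_max_add[OF n] M_def by simp
  have m': "leaf_min n c' = m + 1"
    using leaf_min_cong[of n c' "\<lambda>u. c u + 1"] leaves leaf_min_add[OF n] m_def by simp
  have "M < v"
    using above leaf_max_le_iff[OF n, of c "v - 1"] M_def v_def by auto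
  show ?thesis
  proof (cases "v - m < int n")
    case True
    have "\<forall>l\<in>{1..<n}. c' 0 < c' l"
      using leaves leaf_min_le[of _ n c] step True m_def by fastforce
    then have "star_step n c' = c"
      using star_step_centre_below[OF n] step v_def by (simp add: fun_eq_iff)
    then show ?thesis by (simp add: c'_def)
  next
    case False
    have "m \<le> M"
      using leaf_min_le_leaf_max[OF n] M_def m_def by simp
    then have "centre_excess n c = v - M"
      using \<open>M < v\<close> by (simp add: centre_excess_def M_def m_def v_def)
    moreover have "centre_excess n c' = max 0 ((v - M) - int n)"
      using False M' m' step by (simp add: centre_excess_def)
    ultimately have "star_potential n c' = star_potential n c - 1"
      using ceiling_divide_max_zero_diff[of n "v - M"] \<open>M < v\<close> n M' m'
      by (simp add: star_potential_def M_def m_def)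
    then show ?thesis by (simp add: c'_def)
  qed
qed

lemma star_potential_decreases_centre_within:
  assumes n: "n \<ge> 2" and within: "leaf_min n c \<le> c 0" "c 0 \<le> leaf_max n c"
  shows "star_step n c = c \<or> star_potential n (star_step n c) < star_potential n c"
proof -
  define c' v M m where "c' = star_step n c" and "v = c 0"
    and "M = leaf_max n c" and "m = leaf_min n c"
  show ?thesis
  proof (cases "M = m")
    case True
    have "c u = v" if "u \<in> {0..<n}" for u
    proof (cases "u = 0")
      case False
      with that have "u \<in> {1..<n}" by simp
      then show ?thesis
        using le_leaf_max[of u n c] leaf_min_le[of u n c] within True
        unfolding M_def m_def v_def by linarith
    qed (simp add: v_def)
    then show ?thesis
      using diffusion_step_const_on[of "{0..<n}" c v] by blast
  next
    case False
    have leaves: "min v (m + 1) \<le> c' l \<and> c' l \<le> max v (M - 1)" if "l \<in> {1..<n}" for l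
      using star_step_leaf[OF that, of c] le_leaf_max[OF that, of c] leaf_min_le[OF that, of c]
      by (auto simp: sgn_if c'_def v_def M_def m_def)
    have "leaf_max n c' \<le> max v (M - 1)" and "min v (m + 1) \<le> leaf_min n c'"
      using leaves leaf_max_le_iff[OF n] le_leaf_min_iff[OF n] by auto
    then have spread: "leaf_max n c' - leaf_min n c' \<le> M - m - 1"
      using within False leaf_min_le_leaf_max[OF n, of c] by (simp add: M_def m_def v_def)
    obtain lM where lM: "lM \<in> {1..<n}" "c lM = M"
      using leaf_max_attained[OF n] M_def by metis
    obtain lm where lm: "lm \<in> {1..<n}" "c lm = m"
      using leaf_min_attained[OF n] m_def by metis
    have "v \<le> leaf_max n c'"
      using star_step_leaf[OF lM(1), of c] le_leaf_max[OF lM(1), of c'] lM(2) within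
      by (auto simp: sgn_if c'_def v_def M_def split: if_splits)
    moreover have "leaf_min n c' \<le> v"
      using star_step_leaf[OF lm(1), of c] leaf_min_le[OF lm(1), of c'] lm(2) within
      by (auto simp: sgn_if c'_def v_def m_def split: if_splits)
    moreover have "\<bar>c' 0 - v\<bar> \<le> int n - 1"
    proof -
      have "card {l \<in> {1..<n}. P l} < n" for P
        using card_mono[of "{1..<n}" "{l \<in> {1..<n}. P l}"] n by fastforce
      then have "int (card {l \<in> {1..<n}. P l}) < int n" for P
        by simp
      from this[of "\<lambda>l. c l < c 0"] this[of "\<lambda>l. c 0 < c l"] show ?thesis
        using star_step_centre[OF n, of c] unfolding c'_def v_def by linarith
    qed
    ultimately have "centre_excess n c' \<le> int n - 1"
      using n by (auto simp: centre_excess_def)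
    then have "star_potential n c' \<le> 1 + 2 * (leaf_max n c' - leaf_min n c')"
      using n by (simp add: star_potential_def divide_le_eq_1)
    moreover have "star_potential n c = 2 * (M - m)"
      using within by (simp add: star_potential_def centre_excess_def M_def m_def)
    ultimately have "star_potential n c' < star_potential n c"
      using spread by (simp add: algebra_simps)
    then show ?thesis by (simp add: c'_def)
  qed
qed

lemma star_potential_decreases:
  assumes n: "n \<ge> 2"
  shows "star_step n (star_step n c) = c \<or> star_potential n (star_step n c) < star_potential n c"
proof -
  consider (above) "\<forall>l\<in>{1..<n}. c l < c 0" | (below) "\<forall>l\<in>{1..<n}. c 0 < c l"
    | (within) "leaf_min n c \<le> c 0" "c 0 \<le> leaf_max n c"
    using le_leaf_max[of _ n c] leaf_min_le[of _ n c] by force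
  then show ?thesis
  proof cases
    case above
    then show ?thesis by (rule star_potential_decreases_centre_above[OF n])
  next
    case below
    then have "\<forall>l\<in>{1..<n}. - c l < - c 0" by simp
    from star_potential_decreases_centre_above[OF n this] show ?thesis
      by (simp add: diffusion_step_uminus star_potential_uminus[OF n] fun_eq_iff)
  next
    case within
    then show ?thesis using star_potential_decreases_centre_within[OF n, of c] by auto
  qed
qed

lemma star_period_two_within_potential:
  assumes n: "n \<ge> 2"
  shows "\<exists>T. int T \<le> star_potential n c \<and>
    diffusion {0..<n} (star_adj n) c (T + 2) = diffusion {0..<n} (star_adj n) c T"
proof (induction "nat (star_potential n c)" arbitrary: c rule: less_induct)
  case less
  show ?case
  proof (cases "star_step n (star_step n c) = c")
    case True
    then show ?thesis
      using star_potential_nonneg[OF n, of c]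
      by (intro exI[of _ 0]) (simp add: diffusion_def numeral_2_eq_2)
  next
    case False
    then have decreases: "star_potential n (star_step n c) < star_potential n c"
      using star_potential_decreases[OF n] by blast
    then obtain T where T: "int T \<le> star_potential n (star_step n c)"
      "diffusion {0..<n} (star_adj n) (star_step n c) (T + 2) =
       diffusion {0..<n} (star_adj n) (star_step n c) T"
      using less star_potential_nonneg[OF n, of "star_step n c"] by force
    then have "diffusion {0..<n} (star_adj n) c (Suc T + 2) = diffusion {0..<n} (star_adj n) c (Suc T)"
      by (simp only: diffusion_def funpow_Suc_right add_Suc o_apply)
    then show ?thesis
      using T(1) decreases by (intro exI[of _ "Suc T"]) simp
  qed
qed

theorem theorem19:
  fixes n :: nat and c0 :: "nat \<Rightarrow> int" and lM lm :: nat
  assumes "n \<ge> 2"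
    and "lM \<in> {1..<n}" and "\<forall>l\<in>{1..<n}. c0 l \<le> c0 lM"
    and "lm \<in> {1..<n}" and "\<forall>l\<in>{1..<n}. c0 lm \<le> c0 l"
  shows "tight {0..<n} (star_adj n) c0 \<and>
    int (preperiod {0..<n} (star_adj n) c0)
      \<le> ceiling (real_of_int (max 0 (max (c0 0 - c0 lM) (c0 lm - c0 0))) / real n)
         + 2 * (c0 lM - c0 lm)"
proof -
  have "leaf_max n c0 = c0 lM"
    using le_leaf_max[OF assms(2)] leaf_max_le_iff[OF assms(1)] assms(3) by (meson antisym order_refl)
  moreover have "leaf_min n c0 = c0 lm"
    using leaf_min_le[OF assms(4)] le_leaf_min_iff[OF assms(1)] assms(5) by (meson antisym order_refl)
  ultimately have potential: "star_potential n c0 =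
      \<lceil>real_of_int (max 0 (max (c0 0 - c0 lM) (c0 lm - c0 0))) / real n\<rceil> + 2 * (c0 lM - c0 lm)"
    by (simp add: star_potential_def centre_excess_def)
  obtain T where "int T \<le> star_potential n c0"
    and "diffusion {0..<n} (star_adj n) c0 (T + 2) = diffusion {0..<n} (star_adj n) c0 T"
    using star_period_two_within_potential[OF assms(1)] by blast
  then show ?thesis
    using tight_preperiod_le potential by fastforce
qed

end
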